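(* For every $i\in\mathbb{N}$, the family $\{\mathrm{bit}_i:\mathbb{Z}_n\to\{-1,1\}\}_{n>2^i}$ is concentrated.
   Context: $\mathbb{Z}_n=\{0,\dots,n-1\}$ with addition mod $n$. For $x\in\mathbb{Z}_n$ write its binary expansion $x=\sum_{j\ge0}x_j2^j$ with $x_j\in\{0,1\}$; then $\mathrm{bit}_i(x)=(-1)^{x_i}$. For $f:\mathbb{Z}_n\to\mathbb{C}$: $\langle f,g\rangle=\frac1n\sum_x f(x)\overline{g(x)}$, $\|f\|_2^2=\langle f,f\rangle$, $\chi_\alpha(x)=\exp(2\pi i\alpha x/n)$, $\widehat f(\alpha)=\langle f,\chi_\alpha\rangle$, and $f|_\Gamma=\sum_{\alpha\in\Gamma}\widehat f(\alpha)\chi_\alpha$ for $\Gamma\subseteq\mathbb{Z}_n$. A family of functions $f_n:\mathbb{Z}_{n}\to\mathbb{C}$ (indexed by $n$) is concentrated if there is a bivariate polynomial $P\in\mathbb{R}[x,y]$ such that for every index $n$ and every $\epsilon>0$ there is $\Gamma_n\subseteq\mathbb{Z}_{n}$ with $|\Gamma_n|\le P(\log(n),1/\epsilon)$ and $\|f_n-f_n|_{\Gamma_n}\|_2^2<\epsilon$. *)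

theory Defs
  imports Complex_Main
begin

text \<open>Elements of Z_n are represented by naturals x < n; functions Z_n -> C by
  functions nat => complex (only values on {..<n} matter).\<close>

definition bitf :: "nat \<Rightarrow> nat \<Rightarrow> complex" where
  "bitf i x = (-1) ^ ((x div 2 ^ i) mod 2)"

definition chi :: "nat \<Rightarrow> nat \<Rightarrow> nat \<Rightarrow> complex" where
  "chi n \<alpha> x = exp (2 * of_real pi * \<i> * of_nat \<alpha> * of_nat x / of_nat n)"

definition zinner :: "nat \<Rightarrow> (nat \<Rightarrow> complex) \<Rightarrow> (nat \<Rightarrow> complex) \<Rightarrow> complex" where
  "zinner n f g = (1 / of_nat n) * (\<Sum>x<n. f x * cnj (g x))"

definition znorm2sq :: "nat \<Rightarrow> (nat \<Rightarrow> complex) \<Rightarrow> real" where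
  "znorm2sq n f = Re (zinner n f f)"

definition fourier :: "nat \<Rightarrow> (nat \<Rightarrow> complex) \<Rightarrow> nat \<Rightarrow> complex" where
  "fourier n f \<alpha> = zinner n f (chi n \<alpha>)"

definition frestrict :: "nat \<Rightarrow> (nat \<Rightarrow> complex) \<Rightarrow> nat set \<Rightarrow> nat \<Rightarrow> complex" where
  "frestrict n f \<Gamma> = (\<lambda>x. \<Sum>\<alpha>\<in>\<Gamma>. fourier n f \<alpha> * chi n \<alpha> x)"

definition is_bipoly :: "(real \<Rightarrow> real \<Rightarrow> real) \<Rightarrow> bool" where
  "is_bipoly P \<longleftrightarrow> (\<exists>d (c :: nat \<Rightarrow> nat \<Rightarrow> real).
      \<forall>x y. P x y = (\<Sum>a\<le>d. \<Sum>b\<le>d. c a b * x ^ a * y ^ b))"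

definition concentrated :: "nat set \<Rightarrow> (nat \<Rightarrow> nat \<Rightarrow> complex) \<Rightarrow> bool" where
  "concentrated N f \<longleftrightarrow> (\<exists>P. is_bipoly P \<and>
     (\<forall>n\<in>N. \<forall>\<epsilon>>0. \<exists>\<Gamma>. \<Gamma> \<subseteq> {..<n} \<and>
        real (card \<Gamma>) \<le> P (ln (real n)) (1 / \<epsilon>) \<and>
        znorm2sq n (\<lambda>x. f n x - frestrict n (f n) \<Gamma> x) < \<epsilon>))"

end

theory Submission
  imports Defs "HOL-Analysis.Complex_Transcendental"
begin

text \<open>Multiplying the coefficient of a bounded \<open>m\<close>-periodic function \<open>f\<close> at frequency \<open>a\<close>
  by \<open>1 - e(-a m / n)\<close> telescopes its defining sum down to two blocks of length \<open>m\<close>, so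
  \<open>|f^(a)| \<le> m B / |a m - k n|\<close> for the multiple \<open>k n\<close> of \<open>n\<close> nearest to \<open>a m\<close>.  The
  frequencies with \<open>|a m - k n| < T\<close> for some \<open>k \<le> m\<close> number at most \<open>2 T (m + 1)\<close>, and
  the squares of all other coefficients sum to \<open>O(m\<^sup>3 B\<^sup>2 / T)\<close> by comparison with
  \<open>\<Sum> 1 / j\<^sup>2\<close>.  With \<open>T \<approx> 1 / \<epsilon>\<close> this gives \<open>O(1 / \<epsilon>)\<close> frequencies, independently
  of \<open>n\<close>; the bit function \<open>bit\<^sub>i\<close> has period \<open>2\<^sup>i\<^sup>+\<^sup>1\<close>.\<close>

definition unit_root :: "nat \<Rightarrow> int \<Rightarrow> complex" where
  "unit_root n k = exp (2 * of_real pi * \<i> * of_int k / of_nat n)"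

lemma chi_eq_unit_root: "chi n a x = unit_root n (int a * int x)"
  unfolding chi_def unit_root_def by (simp add: mult.assoc)

lemma unit_root_add: "unit_root n (a + b) = unit_root n a * unit_root n b"
  unfolding unit_root_def by (simp add: exp_add[symmetric] add_divide_distrib ring_distribs)

lemma cnj_unit_root: "cnj (unit_root n k) = unit_root n (- k)"
  unfolding unit_root_def by (simp add: exp_cnj)

lemma norm_unit_root [simp]: "norm (unit_root n k) = 1"
  unfolding unit_root_def by simp

lemma unit_root_power: "unit_root n k ^ x = unit_root n (k * int x)"
  unfolding unit_root_def by (simp add: exp_of_nat_mult[symmetric] mult_ac)

lemma unit_root_eq_1_iff:
  assumes "n > 0"
  shows "unit_root n k = 1 \<longleftrightarrow> int n dvd k"
proof -
  have "unit_root n k = 1 \<longleftrightarrow> (\<exists>j::int. 2 * pi * k / n = of_int (2 * j) * pi)"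
    unfolding unit_root_def exp_eq_1 by simp
  also have "\<dots> \<longleftrightarrow> (\<exists>j::int. real_of_int k = real_of_int (j * int n))"
    using assms pi_gt_zero by (intro ex_cong1) (auto simp: field_simps)
  also have "\<dots> \<longleftrightarrow> int n dvd k"
    by (auto simp: dvd_def mult.commute simp del: of_int_mult)
  finally show ?thesis .
qed

lemma unit_root_mult_modulus_shift: "n > 0 \<Longrightarrow> unit_root n (k + j * int n) = unit_root n k"
  by (simp add: unit_root_add unit_root_eq_1_iff)

lemma sum_unit_root:
  assumes n: "n > 0"
  shows "(\<Sum>x<n. unit_root n (k * int x)) = (if int n dvd k then of_nat n else 0)"
proof (cases "int n dvd k")
  case True
  then have "unit_root n k = 1" using n by (simp add: unit_root_eq_1_iff)
  then show ?thesis using True by (simp add: unit_root_power[symmetric])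
next
  case False
  have "unit_root n k \<noteq> 1" "unit_root n k ^ n = 1"
    using False n by (simp_all add: unit_root_eq_1_iff unit_root_power)
  then show ?thesis using False by (simp add: unit_root_power[symmetric] sum_gp_strict)
qed

lemma int_dvd_diff_iff_eq: "x < n \<Longrightarrow> y < n \<Longrightarrow> int n dvd int x - int y \<longleftrightarrow> x = y"
  by (simp flip: mod_eq_dvd_iff)

lemma fourier_eq_sum_unit_root:
  "fourier n f a = (\<Sum>y<n. f y * unit_root n (- (int a * int y))) / of_nat n"
  unfolding fourier_def zinner_def chi_eq_unit_root cnj_unit_root by simp

lemma fourier_inversion:
  assumes n: "n > 0" and x: "x < n"
  shows "(\<Sum>a<n. fourier n f a * chi n a x) = f x"
proof -
  have "fourier n f a * chi n a x
      = (\<Sum>y<n. f y * unit_root n ((int x - int y) * int a)) / of_nat n" for a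
    unfolding fourier_eq_sum_unit_root chi_eq_unit_root times_divide_eq_left sum_distrib_right
    by (simp add: mult.assoc algebra_simps flip: unit_root_add)
  then have "(\<Sum>a<n. fourier n f a * chi n a x)
      = (\<Sum>a<n. \<Sum>y<n. f y * unit_root n ((int x - int y) * int a)) / of_nat n"
    by (simp add: sum_divide_distrib)
  also have "\<dots> = (\<Sum>y<n. f y * (\<Sum>a<n. unit_root n ((int x - int y) * int a))) / of_nat n"
    by (subst sum.swap) (simp add: sum_distrib_left)
  also have "\<dots> = (\<Sum>y<n. if y = x then f y * of_nat n else 0) / of_nat n"
    using n x by (intro arg_cong[where f="\<lambda>t. t / _"] sum.cong refl)
      (auto simp: sum_unit_root int_dvd_diff_iff_eq)
  also have "\<dots> = f x" using n x by simp
  finally show ?thesis .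
qed

lemma zinner_sum_chi_self:
  assumes n: "n > 0" and S: "S \<subseteq> {..<n}"
  shows "zinner n (\<lambda>x. \<Sum>a\<in>S. c a * chi n a x) (\<lambda>x. \<Sum>a\<in>S. c a * chi n a x)
       = (\<Sum>a\<in>S. of_real ((cmod (c a))\<^sup>2))"
proof -
  have fin: "finite S" using S finite_subset by blast
  have "zinner n (\<lambda>x. \<Sum>a\<in>S. c a * chi n a x) (\<lambda>x. \<Sum>a\<in>S. c a * chi n a x)
      = (\<Sum>x<n. \<Sum>a\<in>S. \<Sum>b\<in>S. c a * cnj (c b) * unit_root n ((int a - int b) * int x)) / of_nat n"
    unfolding zinner_def chi_eq_unit_root cnj_sum sum_product
    by (simp add: cnj_unit_root algebra_simps flip: unit_root_add)
  also have "\<dots> = (\<Sum>a\<in>S. \<Sum>b\<in>S. c a * cnj (c b) * (\<Sum>x<n. unit_root n ((int a - int b) * int x))) / of_nat n"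
    by (simp only: sum.swap[where A="{..<n}"] sum_distrib_left)
  also have "\<dots> = (\<Sum>a\<in>S. \<Sum>b\<in>S. if b = a then c a * cnj (c a) * of_nat n else 0) / of_nat n"
    using n S by (intro arg_cong[where f="\<lambda>t. t / _"] sum.cong refl)
      (auto simp: sum_unit_root int_dvd_diff_iff_eq subset_eq)
  also have "\<dots> = (\<Sum>a\<in>S. of_real ((cmod (c a))\<^sup>2))"
    using n fin by (simp add: sum_divide_distrib complex_norm_square del: of_real_power)
  finally show ?thesis .
qed

lemma znorm2sq_sub_frestrict:
  assumes n: "n > 0" and G: "G \<subseteq> {..<n}"
  shows "znorm2sq n (\<lambda>x. f x - frestrict n f G x) = (\<Sum>a\<in>{..<n} - G. (cmod (fourier n f a))\<^sup>2)"
proof -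
  have "f x - frestrict n f G x = (\<Sum>a\<in>{..<n} - G. fourier n f a * chi n a x)" if "x < n" for x
    using fourier_inversion[OF n that, of f] sum.subset_diff[OF G, of "\<lambda>a. fourier n f a * chi n a x"]
    unfolding frestrict_def by (simp add: diff_eq_eq)
  then have "zinner n (\<lambda>x. f x - frestrict n f G x) (\<lambda>x. f x - frestrict n f G x)
      = zinner n (\<lambda>x. \<Sum>a\<in>{..<n} - G. fourier n f a * chi n a x)
                 (\<lambda>x. \<Sum>a\<in>{..<n} - G. fourier n f a * chi n a x)"
    unfolding zinner_def by (intro arg_cong[where f="\<lambda>t. _ * t"] sum.cong) auto
  then show ?thesis
    unfolding znorm2sq_def by (simp add: zinner_sum_chi_self[OF n])
qed

lemma sum_lessThan_add:
  fixes n m :: nat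
  shows "(\<Sum>x<n + m. g x) = (\<Sum>x<n. g x) + (\<Sum>x<m. g (x + n))"
  by (induction m) (auto simp: add_ac)

text \<open>Shifting the summation range by one period multiplies the coefficient by a root of
  unity, and the shifted and unshifted sums differ only in two blocks of length \<open>m\<close>.\<close>
lemma norm_fourier_periodic_gap_le:
  assumes n: "n > 0" and periodic: "\<And>x. f (x + m) = f x" and bounded: "\<And>x. norm (f x) \<le> B"
  shows "norm (fourier n f a) * norm (1 - unit_root n (- (int a * int m))) \<le> 2 * m * B / n"
proof -
  define z where "z = unit_root n (- int a)"
  define g where "g x = f x * z ^ x" for x
  define S where "S = (\<Sum>x<n. g x)"
  have fourier: "fourier n f a = S / of_nat n"
    unfolding fourier_eq_sum_unit_root S_def g_def z_def unit_root_power by simp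
  have g_shift: "g (x + m) = z ^ m * g x" for x
    unfolding g_def using periodic[of x] by (simp add: power_add mult_ac)
  have "S + (\<Sum>x<m. g (x + n)) = (\<Sum>x<m. g x) + (\<Sum>x<n. g (x + m))"
    unfolding S_def by (metis sum_lessThan_add add.commute)
  also have "(\<Sum>x<n. g (x + m)) = z ^ m * S"
    unfolding g_shift S_def by (simp add: sum_distrib_left)
  finally have S_gap: "S * (1 - z ^ m) = (\<Sum>x<m. g x) - (\<Sum>x<m. g (x + n))"
    by (simp add: algebra_simps)
  have norm_g: "norm (g x) \<le> B" for x
    unfolding g_def z_def by (simp add: norm_mult norm_power bounded)
  have "norm (\<Sum>x<m. g x) \<le> m * B" "norm (\<Sum>x<m. g (x + n)) \<le> m * B"
    using sum_norm_le[of "{..<m}", OF norm_g] by auto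
  then have "norm S * norm (1 - z ^ m) \<le> 2 * m * B"
    using norm_triangle_ineq4[of "\<Sum>x<m. g x" "\<Sum>x<m. g (x + n)"]
    unfolding norm_mult[symmetric] S_gap by linarith
  moreover have "z ^ m = unit_root n (- (int a * int m))"
    unfolding z_def unit_root_power by simp
  ultimately show ?thesis
    using n unfolding fourier by (simp add: norm_divide divide_right_mono)
qed

lemma sin_ge_third:
  fixes x :: real
  assumes "0 \<le> x" "x \<le> pi / 2"
  shows "x / 3 \<le> sin x"
proof -
  have "(\<Sum>m<3. sin_coeff m * x ^ m) = x"
    by (simp add: eval_nat_numeral sin_coeff_def)
  moreover have "inverse (fact 3) * \<bar>x\<bar> ^ 3 = x ^ 3 / 6"
    using assms by (simp add: fact_numeral field_simps)
  ultimately have "\<bar>sin x - x\<bar> \<le> x ^ 3 / 6"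
    using Maclaurin_sin_bound[of x 3] by simp
  moreover have "x * x \<le> 2 * 2"
    using assms pi_less_4 by (intro mult_mono) auto
  then have "x ^ 3 \<le> 4 * x"
    using mult_right_mono[OF _ assms(1)] by (fastforce simp: power3_eq_cube)
  ultimately show ?thesis by linarith
qed

lemma norm_one_minus_cis_double: "norm (1 - cis (2 * y)) = 2 * \<bar>sin y\<bar>"
proof (rule power2_eq_imp_eq)
  have "(norm (1 - cis (2 * y)))\<^sup>2 = (1 - cos (2 * y))\<^sup>2 + (sin (2 * y))\<^sup>2"
    by (simp add: cmod_power2)
  also have "\<dots> = 2 - 2 * cos (2 * y)"
    using sin_cos_squared_add[of "2 * y"] by (simp add: power2_eq_square algebra_simps)
  also have "\<dots> = (2 * \<bar>sin y\<bar>)\<^sup>2"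
    by (simp add: cos_double_sin power_mult_distrib)
  finally show "(norm (1 - cis (2 * y)))\<^sup>2 = (2 * \<bar>sin y\<bar>)\<^sup>2" .
qed auto

lemma norm_one_minus_unit_root_ge:
  assumes n: "n > 0" and v: "2 * \<bar>v\<bar> \<le> int n"
  shows "2 * \<bar>v\<bar> / n \<le> norm (1 - unit_root n v)"
proof -
  define y where "y = pi * v / n"
  have "unit_root n v = cis (2 * y)"
    unfolding unit_root_def y_def cis_conv_exp by (simp add: field_simps)
  then have gap: "norm (1 - unit_root n v) = 2 * \<bar>sin y\<bar>"
    by (simp add: norm_one_minus_cis_double)
  have abs_y: "\<bar>y\<bar> = pi * \<bar>v\<bar> / n"
    unfolding y_def by (simp add: abs_mult)
  have "real_of_int \<bar>v\<bar> \<le> real n / 2" using v by linarith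
  then have "\<bar>y\<bar> \<le> pi / 2"
    unfolding abs_y using n by (simp add: field_simps)
  then have "\<bar>y\<bar> / 3 \<le> sin \<bar>y\<bar>"
    by (intro sin_ge_third) auto
  also have "sin \<bar>y\<bar> \<le> \<bar>sin y\<bar>"
    by (cases "y \<ge> 0") auto
  finally have "\<bar>y\<bar> / 3 \<le> \<bar>sin y\<bar>" .
  moreover have "3 * \<bar>real_of_int v\<bar> \<le> pi * \<bar>real_of_int v\<bar>"
    using pi_gt3 by (intro mult_right_mono) auto
  then have "\<bar>v\<bar> / n \<le> \<bar>y\<bar> / 3"
    unfolding abs_y using n by (simp add: field_simps)
  ultimately show ?thesis
    unfolding gap by linarith
qed

lemma exists_near_multiple:
  fixes a m n :: nat
  assumes a: "a < n"
  shows "\<exists>k\<le>m. 2 * \<bar>int a * int m - int k * int n\<bar> \<le> int n"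
proof -
  define k where "k = (2 * a * m + n) div (2 * n)"
  define r where "r = (2 * a * m + n) mod (2 * n)"
  have div: "2 * n * k + r = 2 * a * m + n"
    unfolding k_def r_def by (metis div_mult_mod_eq mult.commute)
  have r: "r < 2 * n"
    using a unfolding r_def by simp
  moreover have "a * m + m \<le> n * m"
    using mult_le_mono1[of "Suc a" n m] a by simp
  ultimately have "2 * n * k < 2 * n * (m + 1)"
    using div by (simp add: algebra_simps)
  then have "k \<le> m" by (simp only: mult_less_cancel1) simp
  moreover have "2 * (int a * int m - int k * int n) = int r - int n"
    using arg_cong[OF div, of int] by (simp add: algebra_simps)
  then have "2 * \<bar>int a * int m - int k * int n\<bar> \<le> int n"
    using r by linarith
  ultimately show ?thesis by blast
qed

lemma norm_fourier_periodic_le: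
  assumes n: "n > 0" and periodic: "\<And>x. f (x + m) = f x" and bounded: "\<And>x. norm (f x) \<le> B"
    and near: "2 * \<bar>int a * int m - int k * int n\<bar> \<le> int n"
    and nonzero: "int a * int m - int k * int n \<noteq> 0"
  shows "norm (fourier n f a) \<le> m * B / \<bar>int a * int m - int k * int n\<bar>"
proof -
  define v where "v = int a * int m - int k * int n"
  have "unit_root n (- (int a * int m)) = unit_root n (- v + (- int k) * int n)"
    unfolding v_def by (simp add: algebra_simps)
  also have "\<dots> = unit_root n (- v)"
    using n by (rule unit_root_mult_modulus_shift)
  finally have "2 * \<bar>v\<bar> / n \<le> norm (1 - unit_root n (- (int a * int m)))"
    using norm_one_minus_unit_root_ge[OF n, of "- v"] near unfolding v_def[symmetric] by simp
  moreover have "norm (fourier n f a) * norm (1 - unit_root n (- (int a * int m))) \<le> 2 * real m * B / n"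
    using n periodic bounded by (rule norm_fourier_periodic_gap_le)
  ultimately have "norm (fourier n f a) * (2 * \<bar>v\<bar> / n) \<le> 2 * real m * B / n"
    by (meson mult_left_mono norm_ge_zero order_trans)
  then show ?thesis
    using n nonzero unfolding v_def[symmetric] by (simp add: field_simps)
qed

text \<open>Telescoping against \<open>1 / j\<^sup>2 \<le> 1 / (j - 1) - 1 / j\<close>.\<close>
lemma sum_inverse_square_atLeastLessThan_le:
  fixes T M :: nat
  assumes T: "2 \<le> T" and M: "T \<le> M"
  shows "(\<Sum>j\<in>{T..<M}. 1 / (real j)\<^sup>2) \<le> 1 / (real T - 1) - 1 / (real M - 1)"
  using M
proof (induction M rule: dec_induct)
  case base
  then show ?case by simp
next
  case (step M)
  have "2 \<le> real M" using T step.hyps by linarith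
  then have "1 / (real M)\<^sup>2 \<le> 1 / (real M - 1) - 1 / real M"
    by (simp add: field_simps power2_eq_square)
  then show ?case
    using step.IH step.hyps by simp
qed

lemma sum_inverse_square_nat_le:
  fixes T :: nat
  assumes T: "2 \<le> T" and J: "finite J" "\<forall>j\<in>J. T \<le> j"
  shows "(\<Sum>j\<in>J. 1 / (real j)\<^sup>2) \<le> 1 / (real T - 1)"
proof -
  define M where "M = Suc (Max (insert T J))"
  have "T \<le> M" "J \<subseteq> {T..<M}"
    using J by (auto simp: M_def less_Suc_eq_le le_SucI)
  then have "(\<Sum>j\<in>J. 1 / (real j)\<^sup>2) \<le> 1 / (real T - 1) - 1 / (real M - 1)"
    using sum_mono2[of "{T..<M}" J "\<lambda>j. 1 / (real j)\<^sup>2"]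
      sum_inverse_square_atLeastLessThan_le[OF T] by force
  also have "\<dots> \<le> 1 / (real T - 1)"
    using T \<open>T \<le> M\<close> by simp
  finally show ?thesis .
qed

lemma sum_inverse_square_int_le:
  fixes v :: "'a \<Rightarrow> int" and T :: nat
  assumes T: "2 \<le> T" and A: "finite A" "inj_on v A" "\<forall>a\<in>A. int T \<le> \<bar>v a\<bar>"
  shows "(\<Sum>a\<in>A. 1 / (real_of_int (v a))\<^sup>2) \<le> 2 / (real T - 1)"
proof -
  have half: "(\<Sum>a\<in>A'. 1 / (real_of_int (v a))\<^sup>2) \<le> 1 / (real T - 1)"
    if A': "A' \<subseteq> A" "inj_on (\<lambda>a. nat \<bar>v a\<bar>) A'" for A'
  proof -
    have "(\<Sum>a\<in>A'. 1 / (real_of_int (v a))\<^sup>2) = (\<Sum>a\<in>A'. 1 / (real (nat \<bar>v a\<bar>))\<^sup>2)"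
      by simp
    also have "\<dots> = (\<Sum>j\<in>(\<lambda>a. nat \<bar>v a\<bar>) ` A'. 1 / (real j)\<^sup>2)"
      using A'(2) by (simp add: sum.reindex)
    also have "\<dots> \<le> 1 / (real T - 1)"
      using A A' finite_subset by (intro sum_inverse_square_nat_le[OF T]) fastforce+
    finally show ?thesis .
  qed
  have "(\<Sum>a\<in>A. 1 / (real_of_int (v a))\<^sup>2)
      = (\<Sum>a\<in>{a\<in>A. 0 < v a}. 1 / (real_of_int (v a))\<^sup>2) + (\<Sum>a\<in>{a\<in>A. v a < 0}. 1 / (real_of_int (v a))\<^sup>2)"
    using A T by (subst sum.union_disjoint[symmetric]) (auto intro!: sum.cong)
  also have "\<dots> \<le> 1 / (real T - 1) + 1 / (real T - 1)"
    using A(2) by (intro add_mono half) (auto simp: inj_on_def)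
  finally show ?thesis by simp
qed

definition near_multiples :: "nat \<Rightarrow> nat \<Rightarrow> nat \<Rightarrow> nat set" where
  "near_multiples m n T = {a. a < n \<and> (\<exists>k\<le>m. \<bar>int a * int m - int k * int n\<bar> < int T)}"

lemma card_near_multiples_le:
  assumes m: "m > 0"
  shows "card (near_multiples m n T) \<le> (m + 1) * (2 * T)"
proof -
  define S where "S k = {a. a < n \<and> \<bar>int a * int m - int k * int n\<bar> < int T}" for k
  have "card (S k) \<le> 2 * T" for k
  proof -
    have "inj_on (\<lambda>a. nat (int a * int m - int k * int n + int T)) (S k)"
    proof (rule inj_onI)
      fix x y
      assume "x \<in> S k" "y \<in> S k"
        and "nat (int x * int m - int k * int n + int T) = nat (int y * int m - int k * int n + int T)"
      then have "int x * int m = int y * int m"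
        by (subst (asm) eq_nat_nat_iff) (auto simp: S_def)
      then show "x = y" using m by simp
    qed
    moreover have "(\<lambda>a. nat (int a * int m - int k * int n + int T)) ` S k \<subseteq> {..<2 * T}"
      by (auto simp: S_def)
    ultimately show ?thesis
      by (metis card_inj_on_le card_lessThan finite_lessThan)
  qed
  have "card (\<Union>k\<le>m. S k) \<le> (\<Sum>k\<le>m. card (S k))"
    by (rule card_UN_le) simp
  also have "\<dots> \<le> (m + 1) * (2 * T)"
    using sum_mono[of "{..m}" "\<lambda>k. card (S k)" "\<lambda>_. 2 * T"] \<open>\<And>k. card (S k) \<le> 2 * T\<close> by simp
  finally have "card (\<Union>k\<le>m. S k) \<le> (m + 1) * (2 * T)" .
  moreover have "near_multiples m n T = (\<Union>k\<le>m. S k)"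
    by (auto simp: near_multiples_def S_def)
  ultimately show ?thesis by simp
qed

lemma sum_fourier_periodic_outside_near_multiples_le:
  assumes n: "n > 0" and m: "m > 0" and T: "2 \<le> T"
    and periodic: "\<And>x. f (x + m) = f x" and bounded: "\<And>x. norm (f x) \<le> B"
  shows "(\<Sum>a\<in>{..<n} - near_multiples m n T. (norm (fourier n f a))\<^sup>2)
           \<le> 2 * (m + 1) * (m * B)\<^sup>2 / (real T - 1)"
proof -
  define v where "v a k = int a * int m - int k * int n" for a k
  define h where "h a k = (if int T \<le> \<bar>v a k\<bar> then (m * B)\<^sup>2 / (real_of_int (v a k))\<^sup>2 else 0)" for a k
  have h_nonneg: "0 \<le> h a k" for a k
    by (simp add: h_def)
  have pointwise: "(norm (fourier n f a))\<^sup>2 \<le> (\<Sum>k\<le>m. h a k)"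
    if a: "a \<in> {..<n} - near_multiples m n T" for a
  proof -
    obtain k where k: "k \<le> m" "2 * \<bar>v a k\<bar> \<le> int n"
      using exists_near_multiple[of a n m] a unfolding v_def by auto
    have far: "int T \<le> \<bar>v a k\<bar>"
      using a k(1) by (auto simp: near_multiples_def v_def)
    then have "norm (fourier n f a) \<le> m * B / \<bar>v a k\<bar>"
      using norm_fourier_periodic_le[where f = f and m = m and B = B, OF n periodic bounded, of a k] k T
      unfolding v_def by auto
    then have "(norm (fourier n f a))\<^sup>2 \<le> (m * B / \<bar>v a k\<bar>)\<^sup>2"
      by (intro power_mono) auto
    also have "\<dots> = h a k"
      using far by (simp add: h_def power_divide)
    also have "\<dots> \<le> (\<Sum>k\<le>m. h a k)"
      using k(1) h_nonneg by (intro member_le_sum) auto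
    finally show ?thesis .
  qed
  have column: "(\<Sum>a<n. h a k) \<le> 2 * (m * B)\<^sup>2 / (real T - 1)" for k
  proof -
    have "(\<Sum>a<n. h a k) = (\<Sum>a\<in>{a\<in>{..<n}. int T \<le> \<bar>v a k\<bar>}. (m * B)\<^sup>2 / (real_of_int (v a k))\<^sup>2)"
      unfolding h_def by (rule sum.inter_filter[symmetric]) simp
    also have "\<dots> = (m * B)\<^sup>2 * (\<Sum>a\<in>{a\<in>{..<n}. int T \<le> \<bar>v a k\<bar>}. 1 / (real_of_int (v a k))\<^sup>2)"
      by (simp add: sum_distrib_left)
    also have "\<dots> \<le> (m * B)\<^sup>2 * (2 / (real T - 1))"
      using m by (intro mult_left_mono sum_inverse_square_int_le[OF T]) (auto simp: inj_on_def v_def)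
    finally show ?thesis by (simp add: mult.commute)
  qed
  have "(\<Sum>a\<in>{..<n} - near_multiples m n T. (norm (fourier n f a))\<^sup>2)
      \<le> (\<Sum>a\<in>{..<n} - near_multiples m n T. \<Sum>k\<le>m. h a k)"
    by (rule sum_mono) (rule pointwise)
  also have "\<dots> \<le> (\<Sum>a<n. \<Sum>k\<le>m. h a k)"
    by (rule sum_mono2) (auto intro: sum_nonneg h_nonneg)
  also have "\<dots> = (\<Sum>k\<le>m. \<Sum>a<n. h a k)"
    by (rule sum.swap)
  also have "\<dots> \<le> (m + 1) * (2 * (m * B)\<^sup>2 / (real T - 1))"
    using sum_bounded_above[of "{..m}" "\<lambda>k. \<Sum>a<n. h a k", OF column] by simp
  finally show ?thesis by (simp add: algebra_simps)
qed

lemma is_bipoly_affine: "is_bipoly (\<lambda>x y. a + b * y)"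
  unfolding is_bipoly_def
  by (rule exI[of _ 1], rule exI[of _ "\<lambda>i j. if i = 0 \<and> j = 0 then a else if i = 0 \<and> j = 1 then b else 0"])
     (simp add: atMost_Suc)

lemma concentrated_periodic:
  assumes m: "m > 0" and periodic: "\<And>x. f (x + m) = f x" and bounded: "\<And>x. norm (f x) \<le> B"
  shows "concentrated N (\<lambda>_. f)"
proof -
  define K where "K = 2 * (real m + 1) * (real m * B)\<^sup>2"
  define P where "P = (\<lambda>(_ :: real) y. 6 * (m + 1) + 2 * (m + 1) * K * y)"
  have "\<exists>\<Gamma>. \<Gamma> \<subseteq> {..<n} \<and> real (card \<Gamma>) \<le> P (ln (real n)) (1 / \<epsilon>)
          \<and> znorm2sq n (\<lambda>x. f x - frestrict n f \<Gamma> x) < \<epsilon>" if \<epsilon>: "\<epsilon> > 0" for n \<epsilon>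
  proof -
    define T where "T = nat \<lceil>K / \<epsilon>\<rceil> + 2"
    have "0 \<le> K / \<epsilon>" using \<epsilon> by (simp add: K_def)
    then have T_real: "real T = of_int \<lceil>K / \<epsilon>\<rceil> + 2"
      unfolding T_def by simp
    have "K / \<epsilon> < real T - 1" "real T \<le> K / \<epsilon> + 3"
      using T_real le_of_int_ceiling[of "K / \<epsilon>"] of_int_ceiling_le_add_one[of "K / \<epsilon>"]
      by linarith+
    moreover have "2 \<le> T"
      by (simp add: T_def)
    ultimately have T: "2 \<le> T" "K / \<epsilon> < real T - 1" "real T \<le> K / \<epsilon> + 3"
      by auto
    have "real (card (near_multiples m n T)) \<le> real ((m + 1) * (2 * T))"
      using card_near_multiples_le[OF m] by (rule of_nat_mono)
    also have "\<dots> = 2 * (m + 1) * real T"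
      by (simp add: algebra_simps)
    also have "\<dots> \<le> 2 * (m + 1) * (K / \<epsilon> + 3)"
      using T(3) by (intro mult_left_mono) auto
    also have "\<dots> = P (ln (real n)) (1 / \<epsilon>)"
      by (simp add: P_def algebra_simps)
    finally have card: "real (card (near_multiples m n T)) \<le> P (ln (real n)) (1 / \<epsilon>)" .
    have "znorm2sq n (\<lambda>x. f x - frestrict n f (near_multiples m n T) x) < \<epsilon>"
    proof (cases "n = 0")
      case True
      then show ?thesis using \<epsilon> by (simp add: znorm2sq_def zinner_def)
    next
      case False
      have "znorm2sq n (\<lambda>x. f x - frestrict n f (near_multiples m n T) x)
          = (\<Sum>a\<in>{..<n} - near_multiples m n T. (norm (fourier n f a))\<^sup>2)"
        using False by (intro znorm2sq_sub_frestrict) (auto simp: near_multiples_def)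
      also have "\<dots> \<le> K / (real T - 1)"
        unfolding K_def
        by (rule sum_fourier_periodic_outside_near_multiples_le[where f = f])
           (use False m T(1) periodic bounded in auto)
      also have "\<dots> < \<epsilon>"
        using T(1,2) \<epsilon> by (simp add: field_simps)
      finally show ?thesis .
    qed
    moreover have "near_multiples m n T \<subseteq> {..<n}"
      by (auto simp: near_multiples_def)
    ultimately show ?thesis using card by blast
  qed
  moreover have "is_bipoly P"
    unfolding P_def by (rule is_bipoly_affine)
  ultimately show ?thesis
    unfolding concentrated_def by blast
qed

lemma bitf_add_period: "bitf i (x + 2 ^ Suc i) = bitf i x"
proof -
  have "(x + 2 ^ Suc i) div 2 ^ i = x div 2 ^ i + 2" by simp
  then show ?thesis unfolding bitf_def by simp
qed

lemma norm_bitf: "norm (bitf i x) = 1"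
  unfolding bitf_def by (simp add: norm_power)

theorem corollary6p5:
  fixes i :: nat
  shows "concentrated {n. n > 2 ^ i} (\<lambda>n. bitf i)"
  using bitf_add_period norm_bitf
  by (intro concentrated_periodic[where m = "2 ^ Suc i" and B = 1]) auto

end
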